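(* Let $S\ge 2$, $T\ge 3$, $\mathcal S=\{1,\dots,S\}$, and let $\mathbf x,\mathbf y$ be two contingency tables on $\mathcal S^T$ lying in the same fiber of the toric homogeneous Markov chain (THMC) model, and put $z^t_{ij}=x^t_{ij}-y^t_{ij}$. Suppose that for some times $1\le t<t'\le T$ and states $s_t,s_{t+1},\dots,s_{t'}\in\mathcal S$ we have $z^{u}_{s_u s_{u+1}}>0$ for all $u=t,\dots,t'-1$ (i.e. $\mathbf x$ dominates $\mathbf y$ in the partial path $t\!:\!s_t s_{t+1}\cdots s_{t'}$). Then, by applying to $\mathbf x$ a finite sequence of crossing path swappings (each step producing again a table with nonnegative entries), one can transform $\mathbf x$ into a table $\tilde{\mathbf x}$ such that $\tilde{\mathbf x}$ contains (with positive frequency) a path $\omega=(\omega_1,\dots,\omega_T)$ with $\omega_u=s_u$ for all $u=t,\dots,t'$.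
   Context: A path is $\omega=(\omega_1,\dots,\omega_T)\in\mathcal S^T$. A contingency table is a function $\mathbf x:\mathcal S^T\to\mathbb Z_{\ge0}$ (a multiset of $N=\sum_\omega x(\omega)$ paths). For $1\le t\le T-1$ and $i,j\in\mathcal S$, $x^t_{ij}$ is the number of paths (with multiplicity) in $\mathbf x$ with $\omega_t=i,\omega_{t+1}=j$; $x^1_i$ is the number of paths with $\omega_1=i$; $x^+_{ij}=\sum_{t=1}^{T-1}x^t_{ij}$. The sufficient statistic of the THMC model is $\mathbf b(\mathbf x)=(\{x^1_i\}_{i\in\mathcal S},\{x^+_{ij}\}_{i,j\in\mathcal S})$, and the fiber of $\mathbf b$ is the set of all tables $\mathbf x$ with $\mathbf b(\mathbf x)=\mathbf b$. Crossing path swapping: if two paths $\omega=(s_1,\dots,s_T)$ and $\omega'=(s'_1,\dots,s'_T)$ satisfy $s_t=s'_t$ for some $t$, replacing them in the table by $\tilde\omega=(s_1,\dots,s_t,s'_{t+1},\dots,s'_T)$ and $\tilde\omega'=(s'_1,\dots,s'_t,s_{t+1},\dots,s_T)$; equivalently adding the move $e_{\tilde\omega}+e_{\tilde\omega'}-e_\omega-e_{\omega'}$ to a table containing $\omega$ and $\omega'$ (here $e_\omega$ is the indicator table of the single path $\omega$). *)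

theory Defs
  imports Main
begin

text \<open>A path of length T is a list w of length T with
  entries in {1..S}; the paper's omega_t is w ! (t - 1) (times are 1-based).\<close>

definition paths :: "nat \<Rightarrow> nat \<Rightarrow> nat list set" where
  "paths S T = {w. length w = T \<and> set w \<subseteq> {1..S}}"

definition is_table :: "nat \<Rightarrow> nat \<Rightarrow> (nat list \<Rightarrow> nat) \<Rightarrow> bool" where
  "is_table S T x \<longleftrightarrow> (\<forall>w. x w \<noteq> 0 \<longrightarrow> w \<in> paths S T)"

definition trans_count :: "nat \<Rightarrow> nat \<Rightarrow> (nat list \<Rightarrow> nat) \<Rightarrow> nat \<Rightarrow> nat \<Rightarrow> nat \<Rightarrow> nat" where
  "trans_count S T x t i j =
     (\<Sum>w\<in>{w\<in>paths S T. w ! (t - 1) = i \<and> w ! t = j}. x w)"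

definition init_count :: "nat \<Rightarrow> nat \<Rightarrow> (nat list \<Rightarrow> nat) \<Rightarrow> nat \<Rightarrow> nat" where
  "init_count S T x i = (\<Sum>w\<in>{w\<in>paths S T. w ! 0 = i}. x w)"

definition plus_count :: "nat \<Rightarrow> nat \<Rightarrow> (nat list \<Rightarrow> nat) \<Rightarrow> nat \<Rightarrow> nat \<Rightarrow> nat" where
  "plus_count S T x i j = (\<Sum>t=1..T-1. trans_count S T x t i j)"

definition same_fiber :: "nat \<Rightarrow> nat \<Rightarrow> (nat list \<Rightarrow> nat) \<Rightarrow> (nat list \<Rightarrow> nat) \<Rightarrow> bool" where
  "same_fiber S T x y \<longleftrightarrow>
     (\<forall>i\<in>{1..S}. init_count S T x i = init_count S T y i) \<and>
     (\<forall>i\<in>{1..S}. \<forall>j\<in>{1..S}. plus_count S T x i j = plus_count S T y i j)"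

definition ind :: "nat list \<Rightarrow> nat list \<Rightarrow> int" where
  "ind w v = (if v = w then 1 else 0)"

definition swap_step :: "nat \<Rightarrow> nat \<Rightarrow> (nat list \<Rightarrow> nat) \<Rightarrow> (nat list \<Rightarrow> nat) \<Rightarrow> bool" where
  "swap_step S T x x' \<longleftrightarrow>
     (\<exists>w w' u. w \<in> paths S T \<and> w' \<in> paths S T \<and> 1 \<le> u \<and> u \<le> T \<and>
        w ! (u - 1) = w' ! (u - 1) \<and>
        (\<forall>v. int (x v) - ind w v - ind w' v \<ge> 0) \<and>
        (\<forall>v. int (x' v) = int (x v) + ind (take u w @ drop u w') v
                         + ind (take u w' @ drop u w) v - ind w v - ind w' v))"

end

theory Submission
  imports Defs
begin

text \<open>A crossing path swapping leaves every x^t_{ij} unchanged,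
  since at each time the two new paths carry the same pair of transitions as the two old ones.
  So the partial path can be grown one step at a time: if some path of the current table
  follows s on t..k, and a path w' carries the transition (s k, s (k+1)) at time k, swapping
  the two at time k yields a path following s on t..k+1.\<close>

lemma finite_paths: "finite (paths S T)"
proof -
  have "paths S T = {xs. set xs \<subseteq> {1..S} \<and> length xs = T}" by (auto simp: paths_def)
  thus ?thesis using finite_lists_length_eq[of "{1..S}" T] by simp
qed

lemma sum_ind: "finite A \<Longrightarrow> (\<Sum>v\<in>A. ind w v) = (if w \<in> A then 1 else 0)"
  unfolding ind_def by (simp add: sum.delta')

lemma nth_take_append_drop:
  assumes "u \<le> length w" "u \<le> length w'"
  shows "(take u w @ drop u w') ! p = (if p < u then w ! p else w' ! p)"
  using assms by (simp add: nth_append)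

lemma take_append_drop_in_paths:
  assumes "w \<in> paths S T" "w' \<in> paths S T"
  shows "take u w @ drop u w' \<in> paths S T"
  using assms unfolding paths_def by (auto dest: in_set_takeD in_set_dropD)

definition transition_at :: "nat \<Rightarrow> 'a list \<Rightarrow> 'a \<times> 'a" where
  "transition_at t v = (v ! (t - 1), v ! t)"

lemma transitions_take_append_drop:
  assumes "length w = length w'" "1 \<le> u" "u \<le> length w" "w ! (u - 1) = w' ! (u - 1)"
  shows "transition_at t (take u w @ drop u w') = transition_at t w \<and>
           transition_at t (take u w' @ drop u w) = transition_at t w'
       \<or> transition_at t (take u w @ drop u w') = transition_at t w' \<and>
           transition_at t (take u w' @ drop u w) = transition_at t w"
proof -
  have nth: "(take u a @ drop u b) ! p = (if p < u then a ! p else b ! p)"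
    if "a \<in> {w, w'}" "b \<in> {w, w'}" for a b p
    using that assms(1,3) nth_take_append_drop[of u a b] by auto
  consider "t < u" | "t = u" | "u < t" by linarith
  thus ?thesis
    by cases (use assms(4) in \<open>auto simp: transition_at_def nth\<close>)
qed

lemma trans_count_swap_step:
  assumes "swap_step S T x x'"
  shows "trans_count S T x' t i j = trans_count S T x t i j"
proof -
  obtain w w' u where w: "w \<in> paths S T" and w': "w' \<in> paths S T" and u: "1 \<le> u" "u \<le> T"
    and cross: "w ! (u - 1) = w' ! (u - 1)"
    and x': "\<forall>v. int (x' v) = int (x v) + ind (take u w @ drop u w') v
                         + ind (take u w' @ drop u w) v - ind w v - ind w' v"
    using assms unfolding swap_step_def by blast
  define A where "A = {v\<in>paths S T. v ! (t - 1) = i \<and> v ! t = j}"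
  define nw where "nw = take u w @ drop u w'"
  define ow where "ow = take u w' @ drop u w"
  have fin: "finite A" unfolding A_def using finite_paths by simp
  have mem: "v \<in> A \<longleftrightarrow> transition_at t v = (i, j)" if "v \<in> paths S T" for v
    using that unfolding A_def transition_at_def by simp
  have nw: "nw \<in> paths S T" and ow: "ow \<in> paths S T"
    unfolding nw_def ow_def using take_append_drop_in_paths w w' by blast+
  have "length w = T" "length w' = T" using w w' by (auto simp: paths_def)
  hence "transition_at t nw = transition_at t w \<and> transition_at t ow = transition_at t w'
       \<or> transition_at t nw = transition_at t w' \<and> transition_at t ow = transition_at t w"
    using transitions_take_append_drop[of w w' u t] u cross unfolding nw_def ow_def by simp
  hence balance: "(if nw \<in> A then 1 else 0) + (if ow \<in> A then 1 else 0)
      = (if w \<in> A then 1 else 0) + (if w' \<in> A then (1::int) else 0)"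
    unfolding mem[OF nw] mem[OF ow] mem[OF w] mem[OF w'] by auto
  have "int (trans_count S T x' t i j) = (\<Sum>v\<in>A. int (x' v))"
    unfolding trans_count_def A_def by simp
  also have "\<dots> = (\<Sum>v\<in>A. int (x v)) + (\<Sum>v\<in>A. ind nw v) + (\<Sum>v\<in>A. ind ow v)
        - (\<Sum>v\<in>A. ind w v) - (\<Sum>v\<in>A. ind w' v)"
    using x' unfolding nw_def ow_def by (simp add: sum.distrib sum_subtractf)
  also have "\<dots> = (\<Sum>v\<in>A. int (x v))"
    unfolding sum_ind[OF fin] using balance by linarith
  also have "\<dots> = int (trans_count S T x t i j)"
    unfolding trans_count_def A_def by simp
  finally show ?thesis by simp
qed

lemma trans_count_rtranclp_swap_step:
  assumes "(swap_step S T)\<^sup>*\<^sup>* x x'"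
  shows "trans_count S T x' t i j = trans_count S T x t i j"
  using assms by (induction rule: rtranclp_induct) (auto simp: trans_count_swap_step)

lemma trans_count_pos_obtains_path:
  assumes "trans_count S T x u i j > 0"
  obtains w where "w \<in> paths S T" "x w > 0" "w ! (u - 1) = i" "w ! u = j"
proof -
  have "(\<Sum>w\<in>{w\<in>paths S T. w ! (u - 1) = i \<and> w ! u = j}. x w) \<noteq> 0"
    using assms unfolding trans_count_def by simp
  then obtain w where "w \<in> {w\<in>paths S T. w ! (u - 1) = i \<and> w ! u = j}" "x w \<noteq> 0"
    by (rule sum.not_neutral_contains_not_neutral)
  thus ?thesis by (intro that) auto
qed

lemma swap_step_creates_take_append_drop:
  assumes "w \<in> paths S T" "w' \<in> paths S T" "w \<noteq> w'" "x w > 0" "x w' > 0"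
    and "1 \<le> u" "u \<le> T" "w ! (u - 1) = w' ! (u - 1)"
  obtains x' where "swap_step S T x x'" "x' (take u w @ drop u w') > 0"
proof -
  define nw where "nw = take u w @ drop u w'"
  define ow where "ow = take u w' @ drop u w"
  define e where "e v = int (x v) + ind nw v + ind ow v - ind w v - ind w' v" for v
  have contains: "\<forall>v. int (x v) - ind w v - ind w' v \<ge> 0"
    using assms(3-5) by (auto simp: ind_def)
  have ind_nonneg: "ind a v \<ge> 0" for a v by (simp add: ind_def)
  have e_nonneg: "e v \<ge> 0" for v
    using contains[rule_format, of v] ind_nonneg[of nw v] ind_nonneg[of ow v]
    unfolding e_def by linarith
  have "\<forall>v. int (nat (e v)) = int (x v) + ind (take u w @ drop u w') v
                  + ind (take u w' @ drop u w) v - ind w v - ind w' v"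
    using e_nonneg unfolding e_def nw_def ow_def by simp
  hence "swap_step S T x (\<lambda>v. nat (e v))"
    unfolding swap_step_def using assms(1,2,6-8) contains by blast
  moreover have "e nw > 0"
  proof -
    have "int (x nw) + ind nw nw - ind w nw - ind w' nw > 0"
      using assms(3-5) by (cases "nw = w"; cases "nw = w'") (simp_all add: ind_def)
    thus ?thesis using ind_nonneg[of ow nw] unfolding e_def by linarith
  qed
  ultimately show ?thesis
    using that[of "\<lambda>v. nat (e v)"] unfolding nw_def by simp
qed

lemma rtranclp_swap_step_realizes_partial_path:
  assumes "1 \<le> t" "t < t'" "t' \<le> T"
    and "\<forall>u\<in>{t..<t'}. trans_count S T x u (s u) (s (u + 1)) > 0"
  shows "\<exists>x' w. (swap_step S T)\<^sup>*\<^sup>* x x' \<and> w \<in> paths S T \<and> x' w > 0 \<and>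
                (\<forall>u\<in>{t..t'}. w ! (u - 1) = s u)"
  using Suc_leI[OF assms(2)]
proof (induction t' rule: dec_induct)
  case base
  have "trans_count S T x t (s t) (s (Suc t)) > 0" using assms(2,4) by simp
  then obtain w where "w \<in> paths S T" "x w > 0" "w ! (t - 1) = s t" "w ! t = s (Suc t)"
    by (rule trans_count_pos_obtains_path)
  moreover have "{t..Suc t} = {t, Suc t}" by auto
  ultimately show ?case by auto
next
  case (step k)
  then obtain x' w where reach: "(swap_step S T)\<^sup>*\<^sup>* x x'" and w: "w \<in> paths S T" "x' w > 0"
    and follows: "\<forall>u\<in>{t..k}. w ! (u - 1) = s u"
    by blast
  have "trans_count S T x' k (s k) (s (Suc k)) > 0"
    using assms(4) step.hyps(1,2) trans_count_rtranclp_swap_step[OF reach] by simp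
  then obtain w' where w': "w' \<in> paths S T" "x' w' > 0" "w' ! (k - 1) = s k" "w' ! k = s (Suc k)"
    by (rule trans_count_pos_obtains_path)
  have range: "{t..Suc k} = insert (Suc k) {t..k}" using step.hyps(1) by auto
  show ?case
  proof (cases "w = w'")
    case True
    thus ?thesis using reach w w' follows range by auto
  next
    case False
    have k: "1 \<le> k" "k \<le> T" using step.hyps assms(1,3) by auto
    have "w ! (k - 1) = w' ! (k - 1)" using follows w'(3) step.hyps(1) by auto
    then obtain x'' where swap: "swap_step S T x' x''" and pos: "x'' (take k w @ drop k w') > 0"
      by (rule swap_step_creates_take_append_drop[OF w(1) w'(1) False w(2) w'(2) k])
    have "length w = T" "length w' = T" using w w' by (auto simp: paths_def)
    hence "(take k w @ drop k w') ! p = (if p < k then w ! p else w' ! p)" for p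
      using nth_take_append_drop[of k w w'] k(2) by simp
    hence "\<forall>u\<in>{t..Suc k}. (take k w @ drop k w') ! (u - 1) = s u"
      using follows w'(4) range assms(1) by auto
    moreover have "(swap_step S T)\<^sup>*\<^sup>* x x''" using reach swap by simp
    ultimately show ?thesis using pos take_append_drop_in_paths[OF w(1) w'(1)] by blast
  qed
qed

theorem lemma2:
  fixes S T :: nat and x y :: "nat list \<Rightarrow> nat" and t t' :: nat and s :: "nat \<Rightarrow> nat"
  assumes "S \<ge> 2" and "T \<ge> 3"
    and "is_table S T x" and "is_table S T y"
    and "same_fiber S T x y"
    and "1 \<le> t" and "t < t'" and "t' \<le> T"
    and "\<forall>u\<in>{t..t'}. s u \<in> {1..S}"
    and "\<forall>u\<in>{t..<t'}. int (trans_count S T x u (s u) (s (u + 1)))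
                        - int (trans_count S T y u (s u) (s (u + 1))) > 0"
  shows "\<exists>x' w. (swap_step S T)\<^sup>*\<^sup>* x x' \<and> w \<in> paths S T \<and> x' w > 0 \<and>
                (\<forall>u\<in>{t..t'}. w ! (u - 1) = s u)"
proof -
  have "\<forall>u\<in>{t..<t'}. trans_count S T x u (s u) (s (u + 1)) > 0"
    using assms(10) by fastforce
  thus ?thesis using rtranclp_swap_step_realizes_partial_path assms(6-8) by blast
qed

end
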